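(* Let $\rho$ be an $n$-qubit state and for $1\le k\le n$ let $\alpha(\rho,\mathcal S_k)$ be the optimal value of the semidefinite program: minimize $\mathrm{Tr}(W\rho)$ over Hermitian $W$ on $\mathcal H_{[n]}$ subject to $\mathrm{Tr}(W)=1$, $W=\sum_{S\in\mathcal S_k}H^S\otimes I^{[n]\setminus S}$ for some Hermitian operators $H^S$ on $\mathcal H_S$, and $W$ fully decomposable. If $\alpha(\rho,\mathcal S_k)<0$ for some $k$, then $\rho$ is genuinely entangled and $$l(\rho)\le\min\{k:\alpha(\rho,\mathcal S_k)<0\}.$$
   Context: Let $[n]=\{1,\dots,n\}$, $\mathcal H_{[n]}=(\mathbb C^2)^{\otimes n}$, $\mathcal H_S$ the tensor product of the qubits in $S$, $I^{T}$ the identity on $\mathcal H_T$, and $\mathcal S_k$ the collection of all $k$-element subsets of $[n]$. For a density matrix $\rho$, $\rho_S$ is the partial trace over qubits outside $S$. An observable $W$ is fully decomposable if for every $\emptyset\ne S\subsetneq[n]$ there exist positive semidefinite $P_S,Q_S$ with $W=P_S+Q_S^{T_S}$, where $T_S$ is the partial transpose on $\mathcal H_S$. A pure state is biseparable if it is a product $|\alpha\rangle_S\otimes|\beta\rangle_{\bar S}$ for some $\emptyset\ne S\subsetneq[n]$; a mixed state is biseparable if it is a convex combination of biseparable pure states; genuinely entangled = not biseparable. $\mathcal C(\rho,\mathcal S)=\{\sigma\text{ density matrix}:\sigma_S=\rho_S\ \forall S\in\mathcal S\}$; $\mathcal S$ detects $\rho$'s GME if all elements of $\mathcal C(\rho,\mathcal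 S)$ are genuinely entangled; $l(\rho)=\min_{\mathcal S\text{ detects }\rho\text{'s GME}}\max_{S\in\mathcal S}|S|$. *)

theory Defs
  imports Complex_Main
begin

text \<open>The computational basis of H_T (T a finite set of qubits) is indexed
  by the subsets x of T (x = set of qubits in state |1>).  An operator on H_T is a
  matrix  A :: nat set => nat set => complex, only its entries on Pow T x Pow T matter.
  A vector in H_T is a function  nat set => complex  (entries on Pow T).\<close>

type_synonym op = "nat set \<Rightarrow> nat set \<Rightarrow> complex"
type_synonym vec = "nat set \<Rightarrow> complex"

definition qubits :: "nat \<Rightarrow> nat set" where
  "qubits n = {1..n}"

definition op_eq :: "nat set \<Rightarrow> op \<Rightarrow> op \<Rightarrow> bool" where
  "op_eq T A B \<longleftrightarrow> (\<forall>x\<in>Pow T. \<forall>y\<in>Pow T. A x y = B x y)"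

definition hermitian :: "nat set \<Rightarrow> op \<Rightarrow> bool" where
  "hermitian T A \<longleftrightarrow> (\<forall>x\<in>Pow T. \<forall>y\<in>Pow T. A y x = cnj (A x y))"

definition qform :: "nat set \<Rightarrow> op \<Rightarrow> vec \<Rightarrow> complex" where
  "qform T A v = (\<Sum>x\<in>Pow T. \<Sum>y\<in>Pow T. cnj (v x) * A x y * v y)"

definition psd :: "nat set \<Rightarrow> op \<Rightarrow> bool" where
  "psd T A \<longleftrightarrow> hermitian T A \<and> (\<forall>v. Re (qform T A v) \<ge> 0)"

definition tr :: "nat set \<Rightarrow> op \<Rightarrow> complex" where
  "tr T A = (\<Sum>x\<in>Pow T. A x x)"

definition tr_prod :: "nat set \<Rightarrow> op \<Rightarrow> op \<Rightarrow> complex" where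
  "tr_prod T A B = (\<Sum>x\<in>Pow T. \<Sum>y\<in>Pow T. A x y * B y x)"

definition density :: "nat set \<Rightarrow> op \<Rightarrow> bool" where
  "density T \<rho> \<longleftrightarrow> psd T \<rho> \<and> tr T \<rho> = 1"

definition ptrace :: "nat set \<Rightarrow> nat set \<Rightarrow> op \<Rightarrow> op" where
  "ptrace N S \<rho> x y = (\<Sum>z\<in>Pow (N - S). \<rho> (x \<union> z) (y \<union> z))"

definition ptranspose :: "nat set \<Rightarrow> op \<Rightarrow> op" where
  "ptranspose S A x y = A ((x - S) \<union> (y \<inter> S)) ((y - S) \<union> (x \<inter> S))"

text \<open>H (operator on H_S) tensor identity on the remaining qubits.\<close>
definition embed :: "nat set \<Rightarrow> op \<Rightarrow> op" where
  "embed S H x y = (if x - S = y - S then H (x \<inter> S) (y \<inter> S) else 0)"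

definition fully_decomposable :: "nat set \<Rightarrow> op \<Rightarrow> bool" where
  "fully_decomposable N W \<longleftrightarrow>
     (\<forall>S. S \<noteq> {} \<and> S \<subset> N \<longrightarrow>
        (\<exists>P Q. psd N P \<and> psd N Q \<and> op_eq N W (\<lambda>x y. P x y + ptranspose S Q x y)))"

definition bisep_pure :: "nat set \<Rightarrow> vec \<Rightarrow> bool" where
  "bisep_pure N \<psi> \<longleftrightarrow> (\<Sum>x\<in>Pow N. (cmod (\<psi> x))\<^sup>2) = 1 \<and>
     (\<exists>S (\<alpha>::vec) (\<beta>::vec). S \<noteq> {} \<and> S \<subset> N \<and> (\<forall>x\<in>Pow N. \<psi> x = \<alpha> (x \<inter> S) * \<beta> (x - S)))"

definition biseparable :: "nat set \<Rightarrow> op \<Rightarrow> bool" where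
  "biseparable N \<sigma> \<longleftrightarrow>
     (\<exists>(m::nat) (p::nat\<Rightarrow>real) (\<psi>::nat\<Rightarrow>vec). (\<forall>i<m. p i \<ge> (0::real) \<and> bisep_pure N (\<psi> i)) \<and> (\<Sum>i<m. p i) = 1 \<and>
        op_eq N \<sigma> (\<lambda>x y. \<Sum>i<m. complex_of_real (p i) * \<psi> i x * cnj (\<psi> i y)))"

definition genuinely_entangled :: "nat set \<Rightarrow> op \<Rightarrow> bool" where
  "genuinely_entangled N \<sigma> \<longleftrightarrow> \<not> biseparable N \<sigma>"

definition compat :: "nat set \<Rightarrow> op \<Rightarrow> nat set set \<Rightarrow> op set" where
  "compat N \<rho> \<S> = {\<sigma>. density N \<sigma> \<and>
      (\<forall>S\<in>\<S>. op_eq S (ptrace N S \<sigma>) (ptrace N S \<rho>))}"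

definition detects :: "nat set \<Rightarrow> op \<Rightarrow> nat set set \<Rightarrow> bool" where
  "detects N \<rho> \<S> \<longleftrightarrow> (\<forall>\<sigma>\<in>compat N \<rho> \<S>. genuinely_entangled N \<sigma>)"

definition lval :: "nat set \<Rightarrow> op \<Rightarrow> nat" where
  "lval N \<rho> = (LEAST m. \<exists>\<S>. \<S> \<subseteq> Pow N \<and> detects N \<rho> \<S> \<and> (\<forall>S\<in>\<S>. card S \<le> m))"

definition subsets_k :: "nat set \<Rightarrow> nat \<Rightarrow> nat set set" where
  "subsets_k N k = {S. S \<subseteq> N \<and> card S = k}"

definition feasible :: "nat set \<Rightarrow> nat \<Rightarrow> op \<Rightarrow> bool" where
  "feasible N k W \<longleftrightarrow> hermitian N W \<and> tr N W = 1 \<and>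
     (\<exists>H. (\<forall>S\<in>subsets_k N k. hermitian S (H S)) \<and>
          op_eq N W (\<lambda>x y. \<Sum>S\<in>subsets_k N k. embed S (H S) x y)) \<and>
     fully_decomposable N W"

definition alpha :: "nat set \<Rightarrow> op \<Rightarrow> nat \<Rightarrow> real" where
  "alpha N \<rho> k = Inf {Re (tr_prod N W \<rho>) | W. feasible N k W}"

end

theory Submission
  imports Defs
begin

text \<open>A fully decomposable W has nonnegative expectation on every biseparable state: on a
  product vector across S the partial transpose on S only conjugates the S-factor, so both
  P and Q^{T_S} contribute nonnegatively.  If moreover W = \<Sum> H^S \<otimes> I, then Tr(W\<sigma>) depends
  on \<sigma> only through its marginals on the sets S.  Hence a feasible W with Tr(W\<rho>) < 0 certifies
  genuine entanglement of every state with the same k-body marginals as \<rho>, i.e. the collection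
  of k-subsets detects \<rho>'s GME.  Negativity of the infimum \<alpha>(\<rho>, S_k) yields such a W, the
  feasible set being nonempty (it contains the maximally mixed state).\<close>

lemma tr_prod_cong_left: "op_eq N A B \<Longrightarrow> tr_prod N A C = tr_prod N B C"
  unfolding op_eq_def tr_prod_def by (auto intro!: sum.cong)

lemma tr_prod_cong_right: "op_eq N B C \<Longrightarrow> tr_prod N A B = tr_prod N A C"
  unfolding op_eq_def tr_prod_def by (auto intro!: sum.cong)

lemma tr_prod_sum_left: "tr_prod N (\<lambda>x y. \<Sum>S\<in>F. A S x y) C = (\<Sum>S\<in>F. tr_prod N (A S) C)"
  unfolding tr_prod_def sum_distrib_right by (simp add: sum.swap[of _ F])

lemma qform_cong_op: "op_eq N A B \<Longrightarrow> qform N A v = qform N B v"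
  unfolding op_eq_def qform_def by (auto intro!: sum.cong)

lemma qform_cong_vec: "(\<And>x. x \<in> Pow N \<Longrightarrow> u x = v x) \<Longrightarrow> qform N A u = qform N A v"
  unfolding qform_def by (auto intro!: sum.cong)

lemma qform_add: "qform N (\<lambda>x y. A x y + B x y) v = qform N A v + qform N B v"
  by (simp add: qform_def distrib_left distrib_right sum.distrib)

lemma qform_ptranspose_product:
  assumes "S \<subseteq> N"
  shows "qform N (ptranspose S Q) (\<lambda>x. \<alpha> (x \<inter> S) * \<beta> (x - S))
       = qform N Q (\<lambda>x. cnj (\<alpha> (x \<inter> S)) * \<beta> (x - S))"
proof -
  define swap where "swap = (\<lambda>(x, y). ((x - S) \<union> (y \<inter> S), (y - S) \<union> (x \<inter> S)))"
  have swap_Pow: "swap p \<in> Pow N \<times> Pow N" if "p \<in> Pow N \<times> Pow N" for p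
    using that assms by (auto simp: swap_def)
  have swap_swap: "swap (swap p) = p" for p
    by (cases p) (auto simp: swap_def)
  have parts: "(x - S \<union> y \<inter> S) \<inter> S = y \<inter> S" "(x - S \<union> y \<inter> S) - S = x - S" for x y :: "nat set"
    by auto
  show ?thesis
    unfolding qform_def sum.cartesian_product
    by (rule sum.reindex_bij_witness[where i=swap and j=swap])
       (auto simp: swap_Pow swap_swap swap_def parts ptranspose_def mult_ac)
qed

lemma psd_qform_nonneg: "psd N A \<Longrightarrow> Re (qform N A v) \<ge> 0"
  unfolding psd_def by blast

lemma fully_decomposable_qform_nonneg:
  assumes fd: "fully_decomposable N W" and bp: "bisep_pure N \<psi>"
  shows "Re (qform N W \<psi>) \<ge> 0"
proof -
  obtain S \<alpha> \<beta> where S: "S \<noteq> {}" "S \<subset> N"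
    and \<psi>: "\<forall>x\<in>Pow N. \<psi> x = \<alpha> (x \<inter> S) * \<beta> (x - S)"
    using bp unfolding bisep_pure_def by blast
  obtain P Q where "psd N P" "psd N Q" and W: "op_eq N W (\<lambda>x y. P x y + ptranspose S Q x y)"
    using fd S unfolding fully_decomposable_def by blast
  have "qform N W \<psi> = qform N P \<psi> + qform N (ptranspose S Q) \<psi>"
    using qform_cong_op[OF W] qform_add by simp
  also have "qform N (ptranspose S Q) \<psi> = qform N (ptranspose S Q) (\<lambda>x. \<alpha> (x \<inter> S) * \<beta> (x - S))"
    using \<psi> by (intro qform_cong_vec) auto
  also have "\<dots> = qform N Q (\<lambda>x. cnj (\<alpha> (x \<inter> S)) * \<beta> (x - S))"
    using S by (intro qform_ptranspose_product) auto
  finally show ?thesis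
    using psd_qform_nonneg[OF \<open>psd N P\<close>] psd_qform_nonneg[OF \<open>psd N Q\<close>] by simp
qed

lemma tr_prod_mixture:
  "tr_prod N W (\<lambda>x y. \<Sum>i<m. complex_of_real (p i) * \<psi> i x * cnj (\<psi> i y))
     = (\<Sum>i<m. complex_of_real (p i) * qform N W (\<psi> i))"
  unfolding tr_prod_def qform_def sum_distrib_left sum_distrib_right
  by (simp add: sum.swap[of _ "{..<m}"] mult_ac)

lemma fully_decomposable_tr_prod_nonneg:
  assumes fd: "fully_decomposable N W" and "biseparable N \<sigma>"
  shows "Re (tr_prod N W \<sigma>) \<ge> 0"
proof -
  obtain m and p :: "nat \<Rightarrow> real" and \<psi> :: "nat \<Rightarrow> vec"
    where mix: "\<forall>i<m. p i \<ge> 0 \<and> bisep_pure N (\<psi> i)"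
      and \<sigma>: "op_eq N \<sigma> (\<lambda>x y. \<Sum>i<m. complex_of_real (p i) * \<psi> i x * cnj (\<psi> i y))"
    using assms(2) unfolding biseparable_def by blast
  have "tr_prod N W \<sigma> = (\<Sum>i<m. complex_of_real (p i) * qform N W (\<psi> i))"
    unfolding tr_prod_cong_right[OF \<sigma>] by (rule tr_prod_mixture)
  then have "Re (tr_prod N W \<sigma>) = (\<Sum>i<m. p i * Re (qform N W (\<psi> i)))"
    by simp
  also have "\<dots> \<ge> 0"
    using mix fully_decomposable_qform_nonneg[OF fd] by (intro sum_nonneg) auto
  finally show ?thesis .
qed

lemma sum_Pow_split:
  assumes "S \<subseteq> N"
  shows "(\<Sum>x\<in>Pow N. f x) = (\<Sum>a\<in>Pow S. \<Sum>z\<in>Pow (N - S). f (a \<union> z))"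
proof -
  have "(\<Sum>(a, z)\<in>Pow S \<times> Pow (N - S). f (a \<union> z)) = (\<Sum>x\<in>Pow N. f x)"
    by (rule sum.reindex_bij_witness[where i="\<lambda>x. (x \<inter> S, x - S)" and j="\<lambda>(a, z). a \<union> z"])
       (use assms in auto)
  then show ?thesis by (simp add: sum.cartesian_product)
qed

lemma tr_prod_embed:
  assumes "S \<subseteq> N" and "finite N"
  shows "tr_prod N (embed S H) \<sigma> = tr_prod S H (ptrace N S \<sigma>)"
proof -
  have embed_block: "(\<Sum>w\<in>Pow (N - S). embed S H (a \<union> z) (b \<union> w) * \<sigma> (b \<union> w) (a \<union> z))
      = H a b * \<sigma> (b \<union> z) (a \<union> z)"
    if "a \<in> Pow S" "b \<in> Pow S" "z \<in> Pow (N - S)" for a b z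
  proof -
    have "embed S H (a \<union> z) (b \<union> w) = (if w = z then H a b else 0)" if "w \<in> Pow (N - S)" for w
    proof -
      have "(a \<union> z) - S = z" "(b \<union> w) - S = w" "(a \<union> z) \<inter> S = a" "(b \<union> w) \<inter> S = b"
        using \<open>a \<in> Pow S\<close> \<open>b \<in> Pow S\<close> \<open>z \<in> Pow (N - S)\<close> that by auto
      then show ?thesis by (auto simp: embed_def)
    qed
    then have "(\<Sum>w\<in>Pow (N - S). embed S H (a \<union> z) (b \<union> w) * \<sigma> (b \<union> w) (a \<union> z))
        = (\<Sum>w\<in>Pow (N - S). if w = z then H a b * \<sigma> (b \<union> z) (a \<union> z) else 0)"
      by (intro sum.cong) auto
    then show ?thesis
      using \<open>z \<in> Pow (N - S)\<close> \<open>finite N\<close> by simp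
  qed
  have "tr_prod N (embed S H) \<sigma> = (\<Sum>a\<in>Pow S. \<Sum>z\<in>Pow (N - S). \<Sum>b\<in>Pow S. \<Sum>w\<in>Pow (N - S).
        embed S H (a \<union> z) (b \<union> w) * \<sigma> (b \<union> w) (a \<union> z))"
    unfolding tr_prod_def by (simp add: sum_Pow_split[OF assms(1)])
  also have "\<dots> = (\<Sum>a\<in>Pow S. \<Sum>z\<in>Pow (N - S). \<Sum>b\<in>Pow S. H a b * \<sigma> (b \<union> z) (a \<union> z))"
    by (intro sum.cong refl embed_block)
  also have "\<dots> = tr_prod S H (ptrace N S \<sigma>)"
    unfolding tr_prod_def ptrace_def sum_distrib_left by (simp add: sum.swap[of _ "Pow (N - S)"])
  finally show ?thesis .
qed

lemma tr_prod_local_cong: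
  assumes "finite N" "\<forall>S\<in>\<S>. S \<subseteq> N"
    and "op_eq N W (\<lambda>x y. \<Sum>S\<in>\<S>. embed S (H S) x y)"
    and "\<forall>S\<in>\<S>. op_eq S (ptrace N S \<sigma>) (ptrace N S \<rho>)"
  shows "tr_prod N W \<sigma> = tr_prod N W \<rho>"
proof -
  have "tr_prod N W \<tau> = (\<Sum>S\<in>\<S>. tr_prod S (H S) (ptrace N S \<tau>))" for \<tau>
  proof -
    have "tr_prod N W \<tau> = (\<Sum>S\<in>\<S>. tr_prod N (embed S (H S)) \<tau>)"
      unfolding tr_prod_cong_left[OF assms(3)] by (rule tr_prod_sum_left)
    also have "\<dots> = (\<Sum>S\<in>\<S>. tr_prod S (H S) (ptrace N S \<tau>))"
      using assms(1,2) by (intro sum.cong refl tr_prod_embed) auto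
    finally show ?thesis .
  qed
  then show ?thesis
    by (simp only:) (use assms(4) in \<open>intro sum.cong refl tr_prod_cong_right, blast\<close>)
qed

lemma witness_detects:
  assumes "finite N" "\<S> \<subseteq> Pow N" "fully_decomposable N W"
    and "op_eq N W (\<lambda>x y. \<Sum>S\<in>\<S>. embed S (H S) x y)"
    and "Re (tr_prod N W \<rho>) < 0"
  shows "detects N \<rho> \<S>"
  unfolding detects_def genuinely_entangled_def
proof
  fix \<sigma> assume "\<sigma> \<in> compat N \<rho> \<S>"
  then have "tr_prod N W \<sigma> = tr_prod N W \<rho>"
    using assms(1,2,4) by (intro tr_prod_local_cong) (auto simp: compat_def)
  then show "\<not> biseparable N \<sigma>"
    using fully_decomposable_tr_prod_nonneg[OF assms(3)] assms(5) by fastforce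
qed

lemma psd_scalar:
  assumes "finite N" "c \<ge> 0"
  shows "psd N (\<lambda>x y. if x = y then complex_of_real c else 0)"
  unfolding psd_def hermitian_def
proof (intro conjI allI ballI)
  fix v
  have "(\<Sum>y\<in>Pow N. cnj (v x) * (if x = y then complex_of_real c else 0) * v y)
      = complex_of_real (c * (cmod (v x))\<^sup>2)" if "x \<in> Pow N" for x
  proof -
    have "(\<Sum>y\<in>Pow N. cnj (v x) * (if x = y then complex_of_real c else 0) * v y)
        = (\<Sum>y\<in>Pow N. if x = y then complex_of_real c * (cnj (v x) * v x) else 0)"
      by (rule sum.cong) auto
    also have "\<dots> = complex_of_real c * (cnj (v x) * v x)"
      using that assms(1) by simp
    finally show ?thesis
      by (simp add: complex_norm_square[symmetric] mult.commute)
  qed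
  then have "qform N (\<lambda>x y. if x = y then complex_of_real c else 0) v
      = (\<Sum>x\<in>Pow N. complex_of_real (c * (cmod (v x))\<^sup>2))"
    unfolding qform_def by (rule sum.cong[OF refl])
  then show "0 \<le> Re (qform N (\<lambda>x y. if x = y then complex_of_real c else 0) v)"
    using assms(2) by (simp add: sum_nonneg)
qed auto

lemma psd_imp_fully_decomposable: "psd N W \<Longrightarrow> fully_decomposable N W"
proof -
  assume "psd N W"
  moreover have "psd N (\<lambda>x y. 0)"
    by (simp add: psd_def hermitian_def qform_def)
  ultimately show ?thesis
    unfolding fully_decomposable_def op_eq_def ptranspose_def by fastforce
qed

lemma embed_scalar: "embed S (\<lambda>a b. if a = b then d else 0) = (\<lambda>x y. if x = y then d else 0)"
proof (intro ext)
  fix x y :: "nat set"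
  have "(x - S = y - S \<and> x \<inter> S = y \<inter> S) \<longleftrightarrow> x = y" by blast
  then show "embed S (\<lambda>a b. if a = b then d else 0) x y = (if x = y then d else 0)"
    by (auto simp: embed_def)
qed

text \<open>The maximally mixed state I/2^|N| splits as a sum of the (n choose k) equal local terms
  I/(2^|N| (n choose k)).\<close>
lemma feasible_nonempty:
  assumes "finite N" "k \<le> card N"
  shows "\<exists>W. feasible N k W"
proof -
  define c :: real where "c = 1 / 2 ^ card N"
  define W :: op where "W = (\<lambda>x y. if x = y then complex_of_real c else 0)"
  define d :: real where "d = c / (card N choose k)"
  have card_subsets: "card (subsets_k N k) = card N choose k"
    using n_subsets[OF assms(1)] by (simp add: subsets_k_def)
  have "psd N W"
    unfolding W_def c_def using assms(1) by (intro psd_scalar) auto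
  then have "hermitian N W" and "fully_decomposable N W"
    by (auto simp: psd_def intro: psd_imp_fully_decomposable)
  moreover have "tr N W = 1"
    using assms(1) by (simp add: tr_def W_def c_def card_Pow)
  moreover have "op_eq N W (\<lambda>x y. \<Sum>S\<in>subsets_k N k. embed S (\<lambda>a b. if a = b then complex_of_real d else 0) x y)"
    using card_subsets assms(2) by (simp add: op_eq_def embed_scalar W_def d_def)
  moreover have "\<forall>S\<in>subsets_k N k. hermitian S (\<lambda>a b. if a = b then complex_of_real d else 0)"
    by (simp add: hermitian_def)
  ultimately have "feasible N k W"
    unfolding feasible_def by (intro conjI exI[of _ "\<lambda>S a b. if a = b then complex_of_real d else 0"])
  then show ?thesis by blast
qed

lemma alpha_neg_witness:
  assumes "finite N" "k \<le> card N" "alpha N \<rho> k < 0"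
  obtains W where "feasible N k W" "Re (tr_prod N W \<rho>) < 0"
proof -
  let ?X = "{Re (tr_prod N W \<rho>) | W. feasible N k W}"
  have "?X \<noteq> {}" using feasible_nonempty[OF assms(1,2)] by blast
  moreover have "Inf ?X < 0" using assms(3) unfolding alpha_def .
  ultimately have "\<exists>x\<in>?X. x < 0" by (rule cInf_lessD)
  then show ?thesis using that by blast
qed

theorem proposition5:
  fixes n :: nat and \<rho> :: op
  assumes "density (qubits n) \<rho>"
    and "\<exists>k\<in>{1..n}. alpha (qubits n) \<rho> k < 0"
  shows "genuinely_entangled (qubits n) \<rho> \<and>
         lval (qubits n) \<rho> \<le> (LEAST k. k \<in> {1..n} \<and> alpha (qubits n) \<rho> k < 0)"
proof -
  let ?N = "qubits n"
  define k where "k = (LEAST k. k \<in> {1..n} \<and> alpha ?N \<rho> k < 0)"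
  have fin: "finite ?N" and card: "card ?N = n" by (simp_all add: qubits_def)
  have k: "k \<in> {1..n}" "alpha ?N \<rho> k < 0"
    using LeastI_ex[OF assms(2)[unfolded Bex_def]] unfolding k_def by auto
  obtain W where "feasible ?N k W" and neg: "Re (tr_prod ?N W \<rho>) < 0"
    using alpha_neg_witness[OF fin] k card by auto
  then obtain H where "fully_decomposable ?N W"
    and "op_eq ?N W (\<lambda>x y. \<Sum>S\<in>subsets_k ?N k. embed S (H S) x y)"
    unfolding feasible_def by blast
  then have det: "detects ?N \<rho> (subsets_k ?N k)"
    using fin neg by (intro witness_detects) (auto simp: subsets_k_def)
  have "genuinely_entangled ?N \<rho>"
    using det assms(1) by (auto simp: detects_def compat_def op_eq_def)
  moreover have "lval ?N \<rho> \<le> k"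
    unfolding lval_def using det by (intro Least_le exI[of _ "subsets_k ?N k"]) (auto simp: subsets_k_def)
  ultimately show ?thesis unfolding k_def by simp
qed

end
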